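(* With the notation of the context, the following equalities of sets of eigenvalues hold: \[\Lambda_N[T]\cup\Lambda_D[T]=\Lambda_P[2T],\quad \Lambda_N[T]\cup\Lambda_{M_1}[T]=\Lambda_N[2T],\quad \Lambda_D[T]\cup\Lambda_{M_2}[T]=\Lambda_D[2T],\] \[\Lambda_{M_1}[T]\cup\Lambda_{M_2}[T]=\Lambda_A[2T],\quad \Lambda_N[T]\cup\Lambda_D[T]\cup\Lambda_{M_1}[T]\cup\Lambda_{M_2}[T]=\Lambda_P[4T].\] Moreover, $\Lambda_{M_1}[T]=\check\Lambda_{M_2}[T]$ and $\Lambda_{M_2}[T]=\check\Lambda_{M_1}[T]$.
   Context: Fix $n\ge 1$, $T>0$, $I=[0,T]$, $J=[0,2T]$. $W^{2n,1}(K)$: $u\in C^{2n-1}(K)$ with $u^{(2n-1)}$ absolutely continuous. Let $a_0,\dots,a_{2n-1}\in L^{\alpha}(I)$, $\alpha\ge1$, $Lu=u^{(2n)}+\sum_{k=0}^{2n-1}a_ku^{(k)}$ on $I$. $\widetilde L u=u^{(2n)}+\sum_{k=0}^{n-1}(\hat a_{2k+1}u^{(2k+1)}+\tilde a_{2k}u^{(2k)})$ on $J$, where $\tilde a_{2k}=a_{2k}$, $\hat a_{2k+1}=a_{2k+1}$ on $I$, and $\tilde a_{2k}(t)=a_{2k}(2T-t)$, $\hat a_{2k+1}(t)=-a_{2k+1}(2T-t)$ for $t\in(T,2T]$; $\widetilde{\widetilde L}$ on $[0,4T]$ is obtained by the same construction from $\widetilde L$ (reflection about $2T$). $\check L u(t)=u^{(2n)}(t)+\sum_{k=0}^{2n-1}(-1)^ka_k(T-t)u^{(k)}(t)$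 on $I$. For an operator $M$ and $\lambda\in\mathbb R$, $M[\lambda]u=Mu+\lambda u$ (i.e. the zero-order coefficient is increased by $\lambda$). A real $\lambda$ is an eigenvalue of the problem "$M$ on $X$" if $M[\lambda]u=0$ a.e. has a nontrivial solution $u\in X$. Spaces ($k=0,\dots,n-1$ unless stated): $X_{N,T}$: $u^{(2k+1)}(0)=u^{(2k+1)}(T)=0$; $X_{D,T}$: $u^{(2k)}(0)=u^{(2k)}(T)=0$; $X_{M_1,T}$: $u^{(2k+1)}(0)=u^{(2k)}(T)=0$; $X_{M_2,T}$: $u^{(2k)}(0)=u^{(2k+1)}(T)=0$ (in $W^{2n,1}(I)$); $X_{P,2T}$: $u^{(k)}(0)=u^{(k)}(2T)$, $k=0,\dots,2n-1$; $X_{A,2T}$: $u^{(k)}(0)=-u^{(k)}(2T)$, $k=0,\dots,2n-1$; $X_{N,2T}$: $u^{(2k+1)}(0)=u^{(2k+1)}(2T)=0$; $X_{D,2T}$: $u^{(2k)}(0)=u^{(2k)}(2T)=0$ (in $W^{2n,1}(J)$); $X_{P,4T}$: $u^{(k)}(0)=u^{(k)}(4T)$, $k=0,\dots,2n-1$ (in $W^{2n,1}([0,4T])$). $\Lambda_N[T],\Lambda_D[T],\Lambda_{M_1}[T],\Lambda_{M_2}[T]$ are the eigenvalue sets of $L$ on $X_{N,T},X_{D,T},X_{M_1,T},X_{M_2,T}$; $\Lambda_P[2T],\Lambda_A[2T],\Lambda_N[2T],\Lambda_D[2T]$ those of $\widetilde L$ on $X_{P,2T},X_{A,2T},X_{N,2T},X_{D,2T}$;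 $\Lambda_P[4T]$ that of $\widetilde{\widetilde L}$ on $X_{P,4T}$; $\check\Lambda_{M_1}[T],\check\Lambda_{M_2}[T]$ those of $\check L$ on $X_{M_1,T},X_{M_2,T}$. *)

theory Defs
  imports "HOL-Analysis.Analysis"
begin

definition abs_cont_on :: "real set \<Rightarrow> (real \<Rightarrow> real) \<Rightarrow> bool" where
  "abs_cont_on K f \<longleftrightarrow>
    (\<forall>\<epsilon>>0. \<exists>\<delta>>0. \<forall>(m::nat) (l::nat \<Rightarrow> real) (r::nat \<Rightarrow> real).
       (\<forall>i<m. l i \<in> K \<and> r i \<in> K \<and> l i \<le> r i) \<and>
       (\<forall>i<m. \<forall>j<m. i \<noteq> j \<longrightarrow> r i \<le> l j \<or> r j \<le> l i) \<and>
       (\<Sum>i<m. r i - l i) < \<delta>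
       \<longrightarrow> (\<Sum>i<m. \<bar>f (r i) - f (l i)\<bar>) < \<epsilon>)"

text \<open>D is the list of derivatives u = D 0, u' = D 1, ..., u^(2n-1) = D (2n-1) of a function
  u in W^{2n,1}(K): the D k are successive derivatives on K (one-sided at the endpoints),
  hence u is C^{2n-1}, and D (2n-1) is absolutely continuous.\<close>
definition W2n1 :: "nat \<Rightarrow> real set \<Rightarrow> (nat \<Rightarrow> real \<Rightarrow> real) \<Rightarrow> bool" where
  "W2n1 n K D \<longleftrightarrow>
    (\<forall>k<2*n-1. \<forall>t\<in>K. (D k has_real_derivative D (Suc k) t) (at t within K)) \<and>
    abs_cont_on K (D (2*n-1))"

definition in_Lp :: "real \<Rightarrow> real set \<Rightarrow> (real \<Rightarrow> real) \<Rightarrow> bool" where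
  "in_Lp \<alpha> K a \<longleftrightarrow> a \<in> borel_measurable (lebesgue_on K) \<and>
      integrable (lebesgue_on K) (\<lambda>t. \<bar>a t\<bar> powr \<alpha>)"

text \<open>The operator M u = u^(2n) + sum_{k<2n} c k * u^(k) on [0,S]; lambda is an eigenvalue of
  M on the space given by boundary condition BC iff M[lambda]u = 0 a.e. has a nontrivial
  solution u = D 0 in W^{2n,1}([0,S]) satisfying BC.\<close>
definition is_eig :: "nat \<Rightarrow> real \<Rightarrow> (nat \<Rightarrow> real \<Rightarrow> real) \<Rightarrow> ((nat \<Rightarrow> real \<Rightarrow> real) \<Rightarrow> bool)
     \<Rightarrow> real \<Rightarrow> bool" where
  "is_eig n S c BC lam \<longleftrightarrow> (\<exists>D. W2n1 n {0..S} D \<and> BC D \<and> (\<exists>t\<in>{0..S}. D 0 t \<noteq> 0) \<and>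
     (AE t in lebesgue_on {0..S}.
        (D (2*n-1) has_real_derivative
           (- (\<Sum>k<2*n. c k t * D k t) - lam * D 0 t)) (at t within {0..S})))"

definition Eig :: "nat \<Rightarrow> real \<Rightarrow> (nat \<Rightarrow> real \<Rightarrow> real) \<Rightarrow> ((nat \<Rightarrow> real \<Rightarrow> real) \<Rightarrow> bool)
     \<Rightarrow> real set" where
  "Eig n S c BC = {lam. is_eig n S c BC lam}"

definition bcN :: "nat \<Rightarrow> real \<Rightarrow> (nat \<Rightarrow> real \<Rightarrow> real) \<Rightarrow> bool" where
  "bcN n S D \<longleftrightarrow> (\<forall>k<n. D (2*k+1) 0 = 0 \<and> D (2*k+1) S = 0)"
definition bcD :: "nat \<Rightarrow> real \<Rightarrow> (nat \<Rightarrow> real \<Rightarrow> real) \<Rightarrow> bool" where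
  "bcD n S D \<longleftrightarrow> (\<forall>k<n. D (2*k) 0 = 0 \<and> D (2*k) S = 0)"
definition bcM1 :: "nat \<Rightarrow> real \<Rightarrow> (nat \<Rightarrow> real \<Rightarrow> real) \<Rightarrow> bool" where
  "bcM1 n S D \<longleftrightarrow> (\<forall>k<n. D (2*k+1) 0 = 0 \<and> D (2*k) S = 0)"
definition bcM2 :: "nat \<Rightarrow> real \<Rightarrow> (nat \<Rightarrow> real \<Rightarrow> real) \<Rightarrow> bool" where
  "bcM2 n S D \<longleftrightarrow> (\<forall>k<n. D (2*k) 0 = 0 \<and> D (2*k+1) S = 0)"
definition bcP :: "nat \<Rightarrow> real \<Rightarrow> (nat \<Rightarrow> real \<Rightarrow> real) \<Rightarrow> bool" where
  "bcP n S D \<longleftrightarrow> (\<forall>k<2*n. D k 0 = D k S)"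
definition bcA :: "nat \<Rightarrow> real \<Rightarrow> (nat \<Rightarrow> real \<Rightarrow> real) \<Rightarrow> bool" where
  "bcA n S D \<longleftrightarrow> (\<forall>k<2*n. D k 0 = - D k S)"

text \<open>Reflection of coefficients about S: on [0,S] unchanged, on (S,2S] the k-th coefficient
  becomes (-1)^k c_k(2S - t).  (Gives tilde-L from L with S = T, and the double tilde from
  tilde-L with S = 2T.)\<close>
definition refl_coef :: "real \<Rightarrow> (nat \<Rightarrow> real \<Rightarrow> real) \<Rightarrow> nat \<Rightarrow> real \<Rightarrow> real" where
  "refl_coef S c k t = (if t \<le> S then c k t else (-1)^k * c k (2*S - t))"

definition check_coef :: "real \<Rightarrow> (nat \<Rightarrow> real \<Rightarrow> real) \<Rightarrow> nat \<Rightarrow> real \<Rightarrow> real" where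
  "check_coef T c k t = (-1)^k * c k (T - t)"

end

theory Submission
  imports Defs
begin

text \<open>Reflecting t \<mapsto> s - t sends the derivatives u^(k) of a solution of M[\<lambda>]u = 0 to
  (-1)^k u^(k)(s - t), which solve the equation whose k-th coefficient is (-1)^k c_k(s - t).
  Hence an eigenfunction on [0,T] whose data at T are even (resp. odd) under this sign pattern
  extends by even (resp. odd) reflection about T to an eigenfunction of the reflected operator
  on [0,2T]. Conversely, an eigenfunction on [0,2T] splits into its even and odd parts, whose
  restrictions to [0,T] solve the original equation, satisfy the boundary conditions at T
  forced by their symmetry, and are not both zero. The 4T identity follows by applying the
  2T identities twice; the check operator is the reflection about T/2.\<close>

subsection \<open>Absolute continuity\<close>

definition small_interval_family ::
    "real set \<Rightarrow> nat \<Rightarrow> (nat \<Rightarrow> real) \<Rightarrow> (nat \<Rightarrow> real) \<Rightarrow> real \<Rightarrow> bool" where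
  "small_interval_family K m l r \<delta> \<longleftrightarrow> (\<forall>i<m. l i \<in> K \<and> r i \<in> K \<and> l i \<le> r i) \<and>
       (\<forall>i<m. \<forall>j<m. i \<noteq> j \<longrightarrow> r i \<le> l j \<or> r j \<le> l i) \<and>
       (\<Sum>i<m. r i - l i) < \<delta>"

lemma abs_cont_on_iff_small_interval_family:
  "abs_cont_on K f \<longleftrightarrow> (\<forall>\<epsilon>>0. \<exists>\<delta>>0. \<forall>m l r.
     small_interval_family K m l r \<delta> \<longrightarrow> (\<Sum>i<m. \<bar>f (r i) - f (l i)\<bar>) < \<epsilon>)"
  unfolding abs_cont_on_def small_interval_family_def by simp

lemma abs_cont_onI:
  assumes "\<And>\<epsilon>. \<epsilon> > 0 \<Longrightarrow> \<exists>\<delta>>0. \<forall>m l r.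
     small_interval_family K m l r \<delta> \<longrightarrow> (\<Sum>i<m. \<bar>f (r i) - f (l i)\<bar>) < \<epsilon>"
  shows "abs_cont_on K f"
  using assms unfolding abs_cont_on_iff_small_interval_family by blast

lemma abs_cont_onE:
  assumes "abs_cont_on K f" "\<epsilon> > 0"
  obtains \<delta> where "\<delta> > 0"
    "\<And>m l r. small_interval_family K m l r \<delta> \<Longrightarrow> (\<Sum>i<m. \<bar>f (r i) - f (l i)\<bar>) < \<epsilon>"
  using assms unfolding abs_cont_on_iff_small_interval_family by blast

lemma abs_cont_on_cong:
  assumes "K' \<subseteq> K" and "\<And>t. t \<in> K' \<Longrightarrow> f t = g t" and "abs_cont_on K f"
  shows "abs_cont_on K' g"
proof (rule abs_cont_onI)
  fix \<epsilon> :: real assume "\<epsilon> > 0"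
  then obtain \<delta> where "\<delta> > 0" and small:
      "\<And>m l r. small_interval_family K m l r \<delta> \<Longrightarrow> (\<Sum>i<m. \<bar>f (r i) - f (l i)\<bar>) < \<epsilon>"
    using abs_cont_onE[OF assms(3)] by blast
  have "(\<Sum>i<m. \<bar>g (r i) - g (l i)\<bar>) < \<epsilon>" if "small_interval_family K' m l r \<delta>" for m l r
  proof -
    have "(\<Sum>i<m. \<bar>g (r i) - g (l i)\<bar>) = (\<Sum>i<m. \<bar>f (r i) - f (l i)\<bar>)"
      using that assms(2) unfolding small_interval_family_def by (intro sum.cong) auto
    also have "\<dots> < \<epsilon>"
      using that assms(1) by (intro small) (auto simp: small_interval_family_def)
    finally show ?thesis .
  qed
  with \<open>\<delta> > 0\<close> show "\<exists>\<delta>>0. \<forall>m l r. small_interval_family K' m l r \<delta> \<longrightarrow>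
      (\<Sum>i<m. \<bar>g (r i) - g (l i)\<bar>) < \<epsilon>" by blast
qed

lemma abs_cont_on_subset: "K' \<subseteq> K \<Longrightarrow> abs_cont_on K f \<Longrightarrow> abs_cont_on K' f"
  by (rule abs_cont_on_cong) auto

lemma abs_cont_on_cmult:
  assumes "abs_cont_on K f"
  shows "abs_cont_on K (\<lambda>t. p * f t)"
proof (rule abs_cont_onI)
  fix \<epsilon> :: real assume "\<epsilon> > 0"
  then have "\<epsilon> / (\<bar>p\<bar> + 1) > 0" by simp
  then obtain \<delta> where "\<delta> > 0" and small: "\<And>m l r. small_interval_family K m l r \<delta> \<Longrightarrow>
      (\<Sum>i<m. \<bar>f (r i) - f (l i)\<bar>) < \<epsilon> / (\<bar>p\<bar> + 1)"
    using abs_cont_onE[OF assms] by blast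
  have "(\<Sum>i<m. \<bar>p * f (r i) - p * f (l i)\<bar>) < \<epsilon>" if "small_interval_family K m l r \<delta>" for m l r
  proof -
    have "(\<Sum>i<m. \<bar>p * f (r i) - p * f (l i)\<bar>) = \<bar>p\<bar> * (\<Sum>i<m. \<bar>f (r i) - f (l i)\<bar>)"
      by (simp add: sum_distrib_left abs_mult flip: right_diff_distrib)
    also have "\<dots> \<le> \<bar>p\<bar> * (\<epsilon> / (\<bar>p\<bar> + 1))"
      using small[OF that] by (intro mult_left_mono) auto
    also have "\<dots> < \<epsilon>"
      using \<open>\<epsilon> > 0\<close> by (simp add: field_simps)
    finally show ?thesis .
  qed
  with \<open>\<delta> > 0\<close> show "\<exists>\<delta>>0. \<forall>m l r. small_interval_family K m l r \<delta> \<longrightarrow>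
      (\<Sum>i<m. \<bar>p * f (r i) - p * f (l i)\<bar>) < \<epsilon>" by blast
qed

lemma abs_cont_on_add:
  assumes "abs_cont_on K f" and "abs_cont_on K g"
  shows "abs_cont_on K (\<lambda>t. f t + g t)"
proof (rule abs_cont_onI)
  fix \<epsilon> :: real assume "\<epsilon> > 0"
  then have "\<epsilon> / 2 > 0" by simp
  obtain \<delta>1 where "\<delta>1 > 0" and small_f: "\<And>m l r. small_interval_family K m l r \<delta>1 \<Longrightarrow>
      (\<Sum>i<m. \<bar>f (r i) - f (l i)\<bar>) < \<epsilon> / 2"
    using abs_cont_onE[OF assms(1) \<open>\<epsilon> / 2 > 0\<close>] by blast
  obtain \<delta>2 where "\<delta>2 > 0" and small_g: "\<And>m l r. small_interval_family K m l r \<delta>2 \<Longrightarrow>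
      (\<Sum>i<m. \<bar>g (r i) - g (l i)\<bar>) < \<epsilon> / 2"
    using abs_cont_onE[OF assms(2) \<open>\<epsilon> / 2 > 0\<close>] by blast
  have "(\<Sum>i<m. \<bar>(f (r i) + g (r i)) - (f (l i) + g (l i))\<bar>) < \<epsilon>"
    if fam: "small_interval_family K m l r (min \<delta>1 \<delta>2)" for m l r
  proof -
    have "(\<Sum>i<m. \<bar>(f (r i) + g (r i)) - (f (l i) + g (l i))\<bar>)
        \<le> (\<Sum>i<m. \<bar>f (r i) - f (l i)\<bar>) + (\<Sum>i<m. \<bar>g (r i) - g (l i)\<bar>)"
      unfolding sum.distrib[symmetric] by (rule sum_mono) (metis abs_triangle_ineq add_diff_add)
    also have "\<dots> < \<epsilon> / 2 + \<epsilon> / 2"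
      using fam by (intro add_strict_mono small_f small_g) (auto simp: small_interval_family_def)
    finally show ?thesis by simp
  qed
  moreover have "min \<delta>1 \<delta>2 > 0" using \<open>\<delta>1 > 0\<close> \<open>\<delta>2 > 0\<close> by simp
  ultimately show "\<exists>\<delta>>0. \<forall>m l r. small_interval_family K m l r \<delta> \<longrightarrow>
      (\<Sum>i<m. \<bar>(f (r i) + g (r i)) - (f (l i) + g (l i))\<bar>) < \<epsilon>" by blast
qed

lemma abs_cont_on_reflect:
  assumes "abs_cont_on K f"
  shows "abs_cont_on ((\<lambda>t. s - t) ` K) (\<lambda>t. f (s - t))"
proof (rule abs_cont_onI)
  fix \<epsilon> :: real assume "\<epsilon> > 0"
  then obtain \<delta> where "\<delta> > 0" and small: "\<And>m l r. small_interval_family K m l r \<delta> \<Longrightarrow>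
      (\<Sum>i<m. \<bar>f (r i) - f (l i)\<bar>) < \<epsilon>"
    using abs_cont_onE[OF assms] by blast
  have "(\<Sum>i<m. \<bar>f (s - r i) - f (s - l i)\<bar>) < \<epsilon>"
    if "small_interval_family ((\<lambda>t. s - t) ` K) m l r \<delta>" for m l r
  proof -
    have "small_interval_family K m (\<lambda>i. s - r i) (\<lambda>i. s - l i) \<delta>"
      using that unfolding small_interval_family_def
      by (auto simp: image_iff sum_subtractf)
    from small[OF this] show ?thesis by (simp add: abs_minus_commute)
  qed
  with \<open>\<delta> > 0\<close> show "\<exists>\<delta>>0. \<forall>m l r. small_interval_family ((\<lambda>t. s - t) ` K) m l r \<delta> \<longrightarrow>
      (\<Sum>i<m. \<bar>f (s - r i) - f (s - l i)\<bar>) < \<epsilon>" by blast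
qed

lemma small_interval_family_clip:
  assumes "small_interval_family {a..d} m l r \<delta>" and "a \<le> b" and "b \<le> d"
  shows "small_interval_family {a..b} m (\<lambda>i. min (l i) b) (\<lambda>i. min (r i) b) \<delta>"
    and "small_interval_family {b..d} m (\<lambda>i. max (l i) b) (\<lambda>i. max (r i) b) \<delta>"
proof -
  have lr: "\<forall>i<m. l i \<in> {a..d} \<and> r i \<in> {a..d} \<and> l i \<le> r i"
    and disj: "\<forall>i<m. \<forall>j<m. i \<noteq> j \<longrightarrow> r i \<le> l j \<or> r j \<le> l i"
    and len: "(\<Sum>i<m. r i - l i) < \<delta>"
    using assms(1) unfolding small_interval_family_def by auto
  have "(\<Sum>i<m. min (r i) b - min (l i) b) \<le> (\<Sum>i<m. r i - l i)"
    and "(\<Sum>i<m. max (r i) b - max (l i) b) \<le> (\<Sum>i<m. r i - l i)"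
    using lr by (auto intro!: sum_mono)
  with lr disj len assms(2,3) show
    "small_interval_family {a..b} m (\<lambda>i. min (l i) b) (\<lambda>i. min (r i) b) \<delta>"
    "small_interval_family {b..d} m (\<lambda>i. max (l i) b) (\<lambda>i. max (r i) b) \<delta>"
    unfolding small_interval_family_def by (auto; smt (verit, best))+
qed

lemma abs_cont_on_interval_Un:
  assumes "a \<le> b" and "b \<le> d"
    and "abs_cont_on {a..b} f" and "abs_cont_on {b..d} f"
  shows "abs_cont_on {a..d} f"
proof (rule abs_cont_onI)
  fix \<epsilon> :: real assume "\<epsilon> > 0"
  then have "\<epsilon> / 2 > 0" by simp
  obtain \<delta>1 where "\<delta>1 > 0" and small1: "\<And>m l r. small_interval_family {a..b} m l r \<delta>1 \<Longrightarrow>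
      (\<Sum>i<m. \<bar>f (r i) - f (l i)\<bar>) < \<epsilon> / 2"
    using abs_cont_onE[OF assms(3) \<open>\<epsilon> / 2 > 0\<close>] by blast
  obtain \<delta>2 where "\<delta>2 > 0" and small2: "\<And>m l r. small_interval_family {b..d} m l r \<delta>2 \<Longrightarrow>
      (\<Sum>i<m. \<bar>f (r i) - f (l i)\<bar>) < \<epsilon> / 2"
    using abs_cont_onE[OF assms(4) \<open>\<epsilon> / 2 > 0\<close>] by blast
  have "(\<Sum>i<m. \<bar>f (r i) - f (l i)\<bar>) < \<epsilon>"
    if fam: "small_interval_family {a..d} m l r (min \<delta>1 \<delta>2)" for m l r
  proof -
    have split: "\<bar>f (r i) - f (l i)\<bar> \<le>
        \<bar>f (min (r i) b) - f (min (l i) b)\<bar> + \<bar>f (max (r i) b) - f (max (l i) b)\<bar>"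
      if "i \<in> {..<m}" for i
    proof -
      have "l i \<le> r i" using fam that unfolding small_interval_family_def by auto
      then have "f (r i) - f (l i) =
          (f (min (r i) b) - f (min (l i) b)) + (f (max (r i) b) - f (max (l i) b))"
        by (cases "r i \<le> b"; cases "l i \<le> b") (simp_all add: min_def max_def)
      then show ?thesis by linarith
    qed
    have "(\<Sum>i<m. \<bar>f (r i) - f (l i)\<bar>) \<le>
        (\<Sum>i<m. \<bar>f (min (r i) b) - f (min (l i) b)\<bar>) + (\<Sum>i<m. \<bar>f (max (r i) b) - f (max (l i) b)\<bar>)"
      unfolding sum.distrib[symmetric] using split by (rule sum_mono)
    also have "\<dots> < \<epsilon> / 2 + \<epsilon> / 2"
    proof -
      have "small_interval_family {a..d} m l r \<delta>1" "small_interval_family {a..d} m l r \<delta>2"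
        using fam by (auto simp: small_interval_family_def)
      with assms(1,2) show ?thesis
        by (intro add_strict_mono small1 small2 small_interval_family_clip)
    qed
    finally show ?thesis by simp
  qed
  moreover have "min \<delta>1 \<delta>2 > 0" using \<open>\<delta>1 > 0\<close> \<open>\<delta>2 > 0\<close> by simp
  ultimately show "\<exists>\<delta>>0. \<forall>m l r. small_interval_family {a..d} m l r \<delta> \<longrightarrow>
      (\<Sum>i<m. \<bar>f (r i) - f (l i)\<bar>) < \<epsilon>" by blast
qed

subsection \<open>One-sided derivatives and null sets\<close>

lemma has_field_derivative_within_closed_notin:
  fixes f :: "real \<Rightarrow> real"
  assumes "t \<notin> K" and "closed K"
  shows "(f has_field_derivative f') (at t within K)"
proof -
  have "trivial_limit (at t within K)"
    using assms closed_limpt trivial_limit_within by blast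
  then show ?thesis unfolding has_field_derivative_iff by (rule Lim_trivial_limit)
qed

lemma has_field_derivative_within_interval_Un:
  fixes f :: "real \<Rightarrow> real"
  assumes "a \<le> b" and "b \<le> d"
    and "t \<in> {a..b} \<Longrightarrow> (f has_field_derivative f') (at t within {a..b})"
    and "t \<in> {b..d} \<Longrightarrow> (f has_field_derivative f') (at t within {b..d})"
  shows "(f has_field_derivative f') (at t within {a..d})"
proof -
  have "{a..d} = {a..b} \<union> {b..d}" using assms(1,2) by auto
  moreover have "(f has_field_derivative f') (at t within {a..b})"
    and "(f has_field_derivative f') (at t within {b..d})"
    using assms(3,4) has_field_derivative_within_closed_notin by blast+
  ultimately show ?thesis
    unfolding has_field_derivative_iff by (simp add: Lim_within_Un)
qed

lemma has_field_derivative_reflect: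
  fixes f :: "real \<Rightarrow> real"
  assumes "(f has_field_derivative f') (at (s - t) within K)"
  shows "((\<lambda>t. x * f (s - t)) has_field_derivative - x * f') (at t within (\<lambda>t. s - t) ` K)"
proof -
  have "(\<lambda>t. s - t) ` (\<lambda>t. s - t) ` K = K" by (auto simp: image_iff)
  then have "(f \<circ> (\<lambda>t. s - t) has_field_derivative f' * -1) (at t within (\<lambda>t. s - t) ` K)"
    using assms by (intro DERIV_image_chain) (auto intro!: derivative_eq_intros)
  then show ?thesis by (auto simp: o_def intro: derivative_eq_intros)
qed

lemma AE_lebesgue_on_interval_iff:
  "(AE t in lebesgue_on {a..b::real}. P t) \<longleftrightarrow> (\<exists>N. negligible N \<and> (\<forall>t\<in>{a..b} - N. P t))"
proof -
  have "(AE t in lebesgue_on {a..b}. P t) \<longleftrightarrow> (AE t in lebesgue. t \<in> {a..b} \<longrightarrow> P t)"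
    by (rule AE_restrict_space_iff) simp
  also have "\<dots> \<longleftrightarrow> (\<exists>N\<in>null_sets lebesgue. {t. \<not> (t \<in> {a..b} \<longrightarrow> P t)} \<subseteq> N)"
    by (simp add: eventually_ae_filter)
  also have "\<dots> \<longleftrightarrow> (\<exists>N. negligible N \<and> (\<forall>t\<in>{a..b} - N. P t))"
    unfolding negligible_iff_null_sets by blast
  finally show ?thesis .
qed

lemma negligible_reflect: "negligible N \<Longrightarrow> negligible ((\<lambda>t::real. s - t) ` N)"
  by (rule negligible_differentiable_image_negligible) (auto intro!: derivative_intros)

subsection \<open>Solutions of the eigenvalue equation\<close>

definition ode_at ::
    "nat \<Rightarrow> real set \<Rightarrow> (nat \<Rightarrow> real \<Rightarrow> real) \<Rightarrow> real \<Rightarrow> (nat \<Rightarrow> real \<Rightarrow> real) \<Rightarrow> real \<Rightarrow> bool" where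
  "ode_at n K c lam D t \<longleftrightarrow>
     (D (2*n-1) has_real_derivative (- (\<Sum>k<2*n. c k t * D k t) - lam * D 0 t)) (at t within K)"

text \<open>The equation of is_eig with its null set explicit and on an arbitrary set K,
  so that solutions can be restricted, reflected and glued.\<close>
definition eigen_solution ::
    "nat \<Rightarrow> real set \<Rightarrow> (nat \<Rightarrow> real \<Rightarrow> real) \<Rightarrow> real \<Rightarrow> (nat \<Rightarrow> real \<Rightarrow> real) \<Rightarrow> bool" where
  "eigen_solution n K c lam D \<longleftrightarrow>
     W2n1 n K D \<and> (\<exists>N. negligible N \<and> (\<forall>t\<in>K - N. ode_at n K c lam D t))"

lemma is_eig_iff_eigen_solution:
  "is_eig n S c BC lam \<longleftrightarrow> (\<exists>D. eigen_solution n {0..S} c lam D \<and> BC D \<and> (\<exists>t\<in>{0..S}. D 0 t \<noteq> 0))"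
  unfolding is_eig_def eigen_solution_def ode_at_def AE_lebesgue_on_interval_iff by blast

lemma eigen_solution_subset:
  assumes "K' \<subseteq> K" and "eigen_solution n K c lam D"
  shows "eigen_solution n K' c lam D"
proof -
  obtain N where W: "W2n1 n K D" and "negligible N" and ode: "\<And>t. t \<in> K - N \<Longrightarrow> ode_at n K c lam D t"
    using assms(2) unfolding eigen_solution_def by blast
  have "W2n1 n K' D"
    using W assms(1) unfolding W2n1_def by (auto intro: DERIV_subset abs_cont_on_subset)
  moreover have "ode_at n K' c lam D t" if "t \<in> K' - N" for t
    using ode[of t] that assms(1) unfolding ode_at_def by (auto intro: DERIV_subset)
  ultimately show ?thesis using \<open>negligible N\<close> unfolding eigen_solution_def by blast
qed

lemma eigen_solution_coef_cong:
  assumes "eigen_solution n K c lam D" and "negligible Z"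
    and "\<And>k t. k < 2*n \<Longrightarrow> t \<in> K \<Longrightarrow> t \<notin> Z \<Longrightarrow> c k t = c' k t"
  shows "eigen_solution n K c' lam D"
proof -
  obtain N where W: "W2n1 n K D" and "negligible N" and ode: "\<And>t. t \<in> K - N \<Longrightarrow> ode_at n K c lam D t"
    using assms(1) unfolding eigen_solution_def by blast
  have "ode_at n K c' lam D t" if "t \<in> K - (N \<union> Z)" for t
  proof -
    have "(\<Sum>k<2*n. c k t * D k t) = (\<Sum>k<2*n. c' k t * D k t)"
      using that assms(3) by (intro sum.cong) auto
    with ode[of t] that show ?thesis unfolding ode_at_def by simp
  qed
  moreover have "negligible (N \<union> Z)" using \<open>negligible N\<close> assms(2) by (rule negligible_Un)
  ultimately show ?thesis using W unfolding eigen_solution_def by blast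
qed

lemma eigen_solution_cong:
  assumes "1 \<le> n" and "eigen_solution n K c lam D"
    and eq: "\<And>k t. k < 2*n \<Longrightarrow> t \<in> K \<Longrightarrow> D k t = D' k t"
  shows "eigen_solution n K c lam D'"
proof -
  obtain N where W: "W2n1 n K D" and "negligible N" and ode: "\<And>t. t \<in> K - N \<Longrightarrow> ode_at n K c lam D t"
    using assms(2) unfolding eigen_solution_def by blast
  have transfer: "(D' k has_real_derivative x) (at t within K)"
    if "(D k has_real_derivative x) (at t within K)" "k < 2*n" "t \<in> K" for k t x
    by (rule has_field_derivative_transform_within[OF that(1) zero_less_one that(3)])
      (use eq that(2) in auto)
  have "W2n1 n K D'"
    unfolding W2n1_def
  proof (intro conjI ballI allI impI)
    fix k t assume k: "k < 2*n-1" and t: "t \<in> K"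
    have "(D k has_real_derivative D (Suc k) t) (at t within K)"
      using W k t unfolding W2n1_def by blast
    moreover have "D (Suc k) t = D' (Suc k) t"
      using k t by (intro eq) auto
    ultimately have "(D k has_real_derivative D' (Suc k) t) (at t within K)"
      by simp
    then show "(D' k has_real_derivative D' (Suc k) t) (at t within K)"
      by (rule transfer) (use k t in auto)
  next
    show "abs_cont_on K (D' (2*n-1))"
      by (rule abs_cont_on_cong[of K K "D (2*n-1)"]) (use eq assms(1) W in \<open>auto simp: W2n1_def\<close>)
  qed
  moreover have "ode_at n K c lam D' t" if "t \<in> K - N" for t
  proof -
    have "(\<Sum>k<2*n. c k t * D k t) = (\<Sum>k<2*n. c k t * D' k t)"
      using that eq by (intro sum.cong) auto
    with ode[of t] that eq[of 0 t] assms(1)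
    have "(D (2*n-1) has_real_derivative (- (\<Sum>k<2*n. c k t * D' k t) - lam * D' 0 t)) (at t within K)"
      unfolding ode_at_def by auto
    then show ?thesis
      unfolding ode_at_def by (rule transfer) (use that assms(1) in auto)
  qed
  ultimately show ?thesis using \<open>negligible N\<close> unfolding eigen_solution_def by blast
qed

lemma eigen_solution_lincomb:
  assumes "eigen_solution n K c lam D1" and "eigen_solution n K c lam D2"
  shows "eigen_solution n K c lam (\<lambda>k t. p * D1 k t + q * D2 k t)"
proof -
  obtain N1 where W1: "W2n1 n K D1" and "negligible N1"
    and ode1: "\<And>t. t \<in> K - N1 \<Longrightarrow> ode_at n K c lam D1 t"
    using assms(1) unfolding eigen_solution_def by blast
  obtain N2 where W2: "W2n1 n K D2" and "negligible N2"
    and ode2: "\<And>t. t \<in> K - N2 \<Longrightarrow> ode_at n K c lam D2 t"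
    using assms(2) unfolding eigen_solution_def by blast
  have "W2n1 n K (\<lambda>k t. p * D1 k t + q * D2 k t)"
    using W1 W2 unfolding W2n1_def
    by (auto intro!: DERIV_add DERIV_cmult abs_cont_on_add abs_cont_on_cmult)
  moreover have "ode_at n K c lam (\<lambda>k t. p * D1 k t + q * D2 k t) t" if "t \<in> K - (N1 \<union> N2)" for t
  proof -
    have "p * (- (\<Sum>k<2*n. c k t * D1 k t) - lam * D1 0 t) + q * (- (\<Sum>k<2*n. c k t * D2 k t) - lam * D2 0 t)
       = - (\<Sum>k<2*n. c k t * (p * D1 k t + q * D2 k t)) - lam * (p * D1 0 t + q * D2 0 t)"
      by (simp add: algebra_simps sum.distrib sum_distrib_left)
    moreover have "((\<lambda>t. p * D1 (2*n-1) t + q * D2 (2*n-1) t) has_real_derivative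
        p * (- (\<Sum>k<2*n. c k t * D1 k t) - lam * D1 0 t) + q * (- (\<Sum>k<2*n. c k t * D2 k t) - lam * D2 0 t))
        (at t within K)"
      using ode1[of t] ode2[of t] that unfolding ode_at_def by (intro DERIV_add DERIV_cmult) auto
    ultimately show ?thesis unfolding ode_at_def by simp
  qed
  moreover have "negligible (N1 \<union> N2)" using \<open>negligible N1\<close> \<open>negligible N2\<close> by (rule negligible_Un)
  ultimately show ?thesis unfolding eigen_solution_def by blast
qed

definition reflect_derivs :: "real \<Rightarrow> (nat \<Rightarrow> real \<Rightarrow> real) \<Rightarrow> nat \<Rightarrow> real \<Rightarrow> real" where
  "reflect_derivs s D k t = (-1)^k * D k (s - t)"

lemma reflect_derivs_reflect_derivs [simp]: "reflect_derivs s (reflect_derivs s D) = D"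
  by (simp add: reflect_derivs_def fun_eq_iff flip: mult.assoc power_add mult_2)

lemma check_coef_eq_reflect_derivs: "check_coef T c = reflect_derivs T c"
  by (simp add: check_coef_def reflect_derivs_def fun_eq_iff)

lemma reflect_interval: "(\<lambda>t. s - t) ` {a..b::real} = {s-b..s-a}"
  by auto

text \<open>The signs (-1)^k of coefficient and derivative cancel in each term of the sum, and the
  leading derivative has odd order 2n - 1.\<close>
lemma eigen_solution_reflect:
  assumes "1 \<le> n" and "eigen_solution n K c lam D"
  shows "eigen_solution n ((\<lambda>t. s - t) ` K) (reflect_derivs s c) lam (reflect_derivs s D)"
proof -
  obtain N where W: "W2n1 n K D" and "negligible N" and ode: "\<And>t. t \<in> K - N \<Longrightarrow> ode_at n K c lam D t"
    using assms(2) unfolding eigen_solution_def by blast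
  have odd_sign: "(-1::real)^(2*n - Suc 0) = -1"
    using assms(1) by (intro neg_one_odd_power) presburger
  have "W2n1 n ((\<lambda>t. s - t) ` K) (reflect_derivs s D)"
    unfolding W2n1_def
  proof (intro conjI ballI allI impI)
    show "(reflect_derivs s D k has_real_derivative reflect_derivs s D (Suc k) t) (at t within (\<lambda>t. s - t) ` K)"
      if "k < 2*n-1" "t \<in> (\<lambda>t. s - t) ` K" for k t
      using that W has_field_derivative_reflect[of "D k" _ s t K "(-1)^k"]
      unfolding W2n1_def reflect_derivs_def by (auto simp: image_iff)
    show "abs_cont_on ((\<lambda>t. s - t) ` K) (reflect_derivs s D (2*n-1))"
      using W unfolding W2n1_def reflect_derivs_def
      by (intro abs_cont_on_cmult abs_cont_on_reflect) auto
  qed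
  moreover have "ode_at n ((\<lambda>t. s - t) ` K) (reflect_derivs s c) lam (reflect_derivs s D) t"
    if "t \<in> (\<lambda>t. s - t) ` K - (\<lambda>t. s - t) ` N" for t
  proof -
    have "s - t \<in> K - N" using that by (auto simp: image_iff)
    have "(\<Sum>k<2*n. reflect_derivs s c k t * reflect_derivs s D k t) = (\<Sum>k<2*n. c k (s - t) * D k (s - t))"
      by (intro sum.cong) (simp_all add: reflect_derivs_def algebra_simps flip: power_add mult_2)
    with has_field_derivative_reflect[OF ode[OF \<open>s - t \<in> K - N\<close>, unfolded ode_at_def], of "(-1)^(2*n-1)"]
    show ?thesis
      unfolding ode_at_def reflect_derivs_def by (simp add: odd_sign)
  qed
  ultimately show ?thesis
    using negligible_reflect[OF \<open>negligible N\<close>] unfolding eigen_solution_def by blast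
qed

lemma eigen_solution_interval_Un:
  assumes "a \<le> b" and "b \<le> d"
    and "eigen_solution n {a..b} c lam D" and "eigen_solution n {b..d} c lam D"
  shows "eigen_solution n {a..d} c lam D"
proof -
  obtain N1 where W1: "W2n1 n {a..b} D" and "negligible N1"
    and ode1: "\<And>t. t \<in> {a..b} - N1 \<Longrightarrow> ode_at n {a..b} c lam D t"
    using assms(3) unfolding eigen_solution_def by blast
  obtain N2 where W2: "W2n1 n {b..d} D" and "negligible N2"
    and ode2: "\<And>t. t \<in> {b..d} - N2 \<Longrightarrow> ode_at n {b..d} c lam D t"
    using assms(4) unfolding eigen_solution_def by blast
  have "W2n1 n {a..d} D"
    unfolding W2n1_def
  proof (intro conjI ballI allI impI)
    show "(D k has_real_derivative D (Suc k) t) (at t within {a..d})" if "k < 2*n-1" for k t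
      using W1 W2 that unfolding W2n1_def
      by (intro has_field_derivative_within_interval_Un[OF assms(1,2)]) auto
    show "abs_cont_on {a..d} (D (2*n-1))"
      using W1 W2 unfolding W2n1_def by (intro abs_cont_on_interval_Un[OF assms(1,2)]) auto
  qed
  moreover have "ode_at n {a..d} c lam D t" if "t \<in> {a..d} - (N1 \<union> N2)" for t
    using that ode1 ode2 unfolding ode_at_def
    by (intro has_field_derivative_within_interval_Un[OF assms(1,2)]) auto
  moreover have "negligible (N1 \<union> N2)" using \<open>negligible N1\<close> \<open>negligible N2\<close> by (rule negligible_Un)
  ultimately show ?thesis unfolding eigen_solution_def by blast
qed

subsection \<open>Even and odd reflection about S\<close>

definition sym_part :: "real \<Rightarrow> (nat \<Rightarrow> real \<Rightarrow> real) \<Rightarrow> nat \<Rightarrow> real \<Rightarrow> real" where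
  "sym_part S D k t = D k t + reflect_derivs (2*S) D k t"

definition antisym_part :: "real \<Rightarrow> (nat \<Rightarrow> real \<Rightarrow> real) \<Rightarrow> nat \<Rightarrow> real \<Rightarrow> real" where
  "antisym_part S D k t = D k t - reflect_derivs (2*S) D k t"

definition reflect_ext :: "real \<Rightarrow> real \<Rightarrow> (nat \<Rightarrow> real \<Rightarrow> real) \<Rightarrow> nat \<Rightarrow> real \<Rightarrow> real" where
  "reflect_ext e S D k t = (if t \<le> S then D k t else e * reflect_derivs (2*S) D k t)"

text \<open>The reflected coefficients are symmetric about S except at t = S, a null set.\<close>
lemma eigen_solution_refl_coef_reflect:
  assumes "1 \<le> n" and "eigen_solution n {0..2*S} (refl_coef S c) lam D"
  shows "eigen_solution n {0..2*S} (refl_coef S c) lam (reflect_derivs (2*S) D)"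
proof (rule eigen_solution_coef_cong)
  show "eigen_solution n {0..2*S} (reflect_derivs (2*S) (refl_coef S c)) lam (reflect_derivs (2*S) D)"
    using eigen_solution_reflect[OF assms, of "2*S"] by (simp add: reflect_interval)
  show "reflect_derivs (2*S) (refl_coef S c) k t = refl_coef S c k t" if "t \<notin> {S}" for k t
    using that by (simp add: reflect_derivs_def refl_coef_def flip: mult.assoc power_add mult_2)
qed simp

lemma eigen_solution_sym_antisym_part:
  assumes "1 \<le> n" and "S > 0" and "eigen_solution n {0..2*S} (refl_coef S c) lam D"
  shows "eigen_solution n {0..S} c lam (sym_part S D)"
    and "eigen_solution n {0..S} c lam (antisym_part S D)"
proof -
  note sol = assms(3) and refl = eigen_solution_refl_coef_reflect[OF assms(1,3)]
  have sub: "{0..S} \<subseteq> {0..2*S}" using assms(2) by auto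
  have "eigen_solution n {0..2*S} (refl_coef S c) lam (sym_part S D)"
    using eigen_solution_lincomb[OF sol refl, of 1 1] by (simp add: sym_part_def[abs_def])
  from eigen_solution_subset[OF sub this]
  show "eigen_solution n {0..S} c lam (sym_part S D)"
    by (rule eigen_solution_coef_cong[OF _ negligible_empty]) (simp add: refl_coef_def)
  have "eigen_solution n {0..2*S} (refl_coef S c) lam (antisym_part S D)"
    using eigen_solution_lincomb[OF sol refl, of 1 "-1"] by (simp add: antisym_part_def[abs_def])
  from eigen_solution_subset[OF sub this]
  show "eigen_solution n {0..S} c lam (antisym_part S D)"
    by (rule eigen_solution_coef_cong[OF _ negligible_empty]) (simp add: refl_coef_def)
qed

text \<open>The matching condition at S says that D and its e-weighted reflection agree there, so the
  two halves glue to a W^{2n,1} function.\<close>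
lemma eigen_solution_reflect_ext:
  assumes "1 \<le> n" and "S > 0" and sol: "eigen_solution n {0..S} c lam D"
    and match: "\<And>k. k < 2*n \<Longrightarrow> D k S = e * (-1)^k * D k S"
  shows "eigen_solution n {0..2*S} (refl_coef S c) lam (reflect_ext e S D)"
proof (rule eigen_solution_interval_Un[of 0 S "2*S"])
  have "eigen_solution n {0..S} (refl_coef S c) lam D"
    using sol by (rule eigen_solution_coef_cong[OF _ negligible_empty]) (auto simp: refl_coef_def)
  then show "eigen_solution n {0..S} (refl_coef S c) lam (reflect_ext e S D)"
    by (rule eigen_solution_cong[OF assms(1)]) (auto simp: reflect_ext_def)
  have glue: "e * reflect_derivs (2*S) D k t = reflect_ext e S D k t"
    if "k < 2*n" and "t \<in> {S..2*S}" for k t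
  proof (cases "t = S")
    case True
    have "e * reflect_derivs (2*S) D k S = e * (-1)^k * D k S"
      by (simp add: reflect_derivs_def)
    also have "\<dots> = D k S"
      using match[OF that(1)] by (rule sym)
    finally show ?thesis
      using True by (simp add: reflect_ext_def)
  next
    case False
    with that(2) show ?thesis by (simp add: reflect_ext_def)
  qed
  have "eigen_solution n {S..2*S} (reflect_derivs (2*S) c) lam (reflect_derivs (2*S) D)"
    using eigen_solution_reflect[OF assms(1) sol, of "2*S"] by (simp add: reflect_interval)
  then have "eigen_solution n {S..2*S} (reflect_derivs (2*S) c) lam
      (\<lambda>k t. e * reflect_derivs (2*S) D k t + 0 * reflect_derivs (2*S) D k t)"
    by (intro eigen_solution_lincomb)
  then have "eigen_solution n {S..2*S} (reflect_derivs (2*S) c) lam (reflect_ext e S D)"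
    by (rule eigen_solution_cong[OF assms(1)]) (simp add: glue)
  then show "eigen_solution n {S..2*S} (refl_coef S c) lam (reflect_ext e S D)"
    by (rule eigen_solution_coef_cong[of _ _ _ _ _ "{S}"])
      (auto simp: refl_coef_def reflect_derivs_def)
qed (use assms(2) in auto)

lemma Eig_subset_Eig_refl_coef:
  assumes "1 \<le> n" and "S > 0"
    and bc: "\<And>D. BC D \<Longrightarrow> (\<forall>k<2*n. D k S = e * (-1)^k * D k S) \<and> BC' (reflect_ext e S D)"
  shows "Eig n S c BC \<subseteq> Eig n (2*S) (refl_coef S c) BC'"
proof
  fix lam assume "lam \<in> Eig n S c BC"
  then obtain D where sol: "eigen_solution n {0..S} c lam D" and "BC D"
    and nonzero: "\<exists>t\<in>{0..S}. D 0 t \<noteq> 0"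
    unfolding Eig_def is_eig_iff_eigen_solution by blast
  have "eigen_solution n {0..2*S} (refl_coef S c) lam (reflect_ext e S D)"
    using bc[OF \<open>BC D\<close>] by (intro eigen_solution_reflect_ext[OF assms(1,2) sol]) auto
  moreover have "\<exists>t\<in>{0..2*S}. reflect_ext e S D 0 t \<noteq> 0"
    using nonzero assms(2) by (force simp: reflect_ext_def)
  ultimately show "lam \<in> Eig n (2*S) (refl_coef S c) BC'"
    unfolding Eig_def is_eig_iff_eigen_solution using bc[OF \<open>BC D\<close>] by blast
qed

lemma Eig_refl_coef_subset_Un:
  assumes "1 \<le> n" and "S > 0"
    and bc: "\<And>D. BC D \<Longrightarrow> BCe (sym_part S D) \<and> BCo (antisym_part S D)"
  shows "Eig n (2*S) (refl_coef S c) BC \<subseteq> Eig n S c BCe \<union> Eig n S c BCo"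
proof
  fix lam assume "lam \<in> Eig n (2*S) (refl_coef S c) BC"
  then obtain D where sol: "eigen_solution n {0..2*S} (refl_coef S c) lam D" and "BC D"
    and nonzero: "\<exists>t\<in>{0..2*S}. D 0 t \<noteq> 0"
    unfolding Eig_def is_eig_iff_eigen_solution by blast
  have "(\<exists>t\<in>{0..S}. sym_part S D 0 t \<noteq> 0) \<or> (\<exists>t\<in>{0..S}. antisym_part S D 0 t \<noteq> 0)"
  proof (rule ccontr)
    assume "\<not> ?thesis"
    then have zero: "D 0 t = 0 \<and> D 0 (2*S - t) = 0" if "t \<in> {0..S}" for t
      using that by (auto simp: sym_part_def antisym_part_def reflect_derivs_def)
    obtain t where "t \<in> {0..2*S}" "D 0 t \<noteq> 0" using nonzero by blast
    then show False
      using zero[of t] zero[of "2*S - t"] by (cases "t \<le> S") auto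
  qed
  then show "lam \<in> Eig n S c BCe \<union> Eig n S c BCo"
    unfolding Eig_def is_eig_iff_eigen_solution
    using eigen_solution_sym_antisym_part[OF assms(1,2) sol] bc[OF \<open>BC D\<close>] by blast
qed

lemma Eig_Un_eq_Eig_refl_coef:
  assumes "1 \<le> n" and "S > 0"
    and "\<And>D. BCe D \<Longrightarrow> (\<forall>k<2*n. D k S = 1 * (-1)^k * D k S) \<and> BC (reflect_ext 1 S D)"
    and "\<And>D. BCo D \<Longrightarrow> (\<forall>k<2*n. D k S = -1 * (-1)^k * D k S) \<and> BC (reflect_ext (-1) S D)"
    and "\<And>D. BC D \<Longrightarrow> BCe (sym_part S D) \<and> BCo (antisym_part S D)"
  shows "Eig n S c BCe \<union> Eig n S c BCo = Eig n (2*S) (refl_coef S c) BC"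
proof (intro equalityI Un_least)
  show "Eig n S c BCe \<subseteq> Eig n (2*S) (refl_coef S c) BC"
    using assms(3) by (rule Eig_subset_Eig_refl_coef[OF assms(1,2)])
  show "Eig n S c BCo \<subseteq> Eig n (2*S) (refl_coef S c) BC"
    using assms(4) by (rule Eig_subset_Eig_refl_coef[OF assms(1,2)])
  show "Eig n (2*S) (refl_coef S c) BC \<subseteq> Eig n S c BCe \<union> Eig n S c BCo"
    using assms(5) by (rule Eig_refl_coef_subset_Un[OF assms(1,2)])
qed

lemma Eig_subset_Eig_check_coef:
  assumes "1 \<le> n" and bc: "\<And>D. BC D \<Longrightarrow> BC' (reflect_derivs T D)"
  shows "Eig n T c BC \<subseteq> Eig n T (check_coef T c) BC'"
proof
  fix lam assume "lam \<in> Eig n T c BC"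
  then obtain D where sol: "eigen_solution n {0..T} c lam D" and "BC D"
    and nonzero: "\<exists>t\<in>{0..T}. D 0 t \<noteq> 0"
    unfolding Eig_def is_eig_iff_eigen_solution by blast
  have "eigen_solution n {0..T} (check_coef T c) lam (reflect_derivs T D)"
    using eigen_solution_reflect[OF assms(1) sol, of T]
    by (simp add: reflect_interval check_coef_eq_reflect_derivs)
  moreover obtain t where "t \<in> {0..T}" "D 0 t \<noteq> 0" using nonzero by blast
  then have "\<exists>t\<in>{0..T}. reflect_derivs T D 0 t \<noteq> 0"
    by (intro bexI[of _ "T - t"]) (auto simp: reflect_derivs_def)
  ultimately show "lam \<in> Eig n T (check_coef T c) BC'"
    unfolding Eig_def is_eig_iff_eigen_solution using bc[OF \<open>BC D\<close>] by blast
qed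

lemma Eig_eq_Eig_check_coef:
  assumes "1 \<le> n"
    and "\<And>D. BC D \<Longrightarrow> BC' (reflect_derivs T D)" and "\<And>D. BC' D \<Longrightarrow> BC (reflect_derivs T D)"
  shows "Eig n T c BC = Eig n T (check_coef T c) BC'"
proof
  show "Eig n T c BC \<subseteq> Eig n T (check_coef T c) BC'"
    using assms(2) by (rule Eig_subset_Eig_check_coef[OF assms(1)])
  have "check_coef T (check_coef T c) = c"
    by (simp add: check_coef_eq_reflect_derivs)
  moreover have "Eig n T (check_coef T c) BC' \<subseteq> Eig n T (check_coef T (check_coef T c)) BC"
    using assms(3) by (rule Eig_subset_Eig_check_coef[OF assms(1)])
  ultimately show "Eig n T (check_coef T c) BC' \<subseteq> Eig n T c BC" by simp
qed

subsection \<open>The boundary conditions\<close>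

lemma all_less_double_iff: "(\<forall>k<2*n. P k) \<longleftrightarrow> (\<forall>j<n. P (2*j) \<and> P (2*j+1))" for n :: nat
proof (intro iffI allI impI)
  fix k assume "\<forall>j<n. P (2*j) \<and> P (2*j+1)" and "k < 2*n"
  moreover have "k = 2*(k div 2) \<or> k = 2*(k div 2) + 1" by presburger
  ultimately show "P k" by (metis less_mult_imp_div_less mult.commute)
qed auto

lemmas bc_reflect_defs = bcN_def bcD_def bcM1_def bcM2_def bcP_def bcA_def
  sym_part_def antisym_part_def reflect_ext_def reflect_derivs_def

lemma Eig_N_Un_D_eq_P:
  "1 \<le> n \<Longrightarrow> S > 0 \<Longrightarrow>
    Eig n S c (bcN n S) \<union> Eig n S c (bcD n S) = Eig n (2*S) (refl_coef S c) (bcP n (2*S))"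
  by (rule Eig_Un_eq_Eig_refl_coef) (auto simp: bc_reflect_defs all_less_double_iff)

lemma Eig_N_Un_M1_eq_N:
  "1 \<le> n \<Longrightarrow> S > 0 \<Longrightarrow>
    Eig n S c (bcN n S) \<union> Eig n S c (bcM1 n S) = Eig n (2*S) (refl_coef S c) (bcN n (2*S))"
  by (rule Eig_Un_eq_Eig_refl_coef) (auto simp: bc_reflect_defs all_less_double_iff)

lemma Eig_D_Un_M2_eq_D:
  "1 \<le> n \<Longrightarrow> S > 0 \<Longrightarrow>
    Eig n S c (bcD n S) \<union> Eig n S c (bcM2 n S) = Eig n (2*S) (refl_coef S c) (bcD n (2*S))"
  by (subst Un_commute, rule Eig_Un_eq_Eig_refl_coef) (auto simp: bc_reflect_defs all_less_double_iff)

lemma Eig_M1_Un_M2_eq_A: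
  "1 \<le> n \<Longrightarrow> S > 0 \<Longrightarrow>
    Eig n S c (bcM1 n S) \<union> Eig n S c (bcM2 n S) = Eig n (2*S) (refl_coef S c) (bcA n (2*S))"
  by (subst Un_commute, rule Eig_Un_eq_Eig_refl_coef) (auto simp: bc_reflect_defs all_less_double_iff)

lemma Eig_M1_eq_check_M2: "1 \<le> n \<Longrightarrow> Eig n T c (bcM1 n T) = Eig n T (check_coef T c) (bcM2 n T)"
  by (rule Eig_eq_Eig_check_coef) (auto simp: bc_reflect_defs)

lemma Eig_M2_eq_check_M1: "1 \<le> n \<Longrightarrow> Eig n T c (bcM2 n T) = Eig n T (check_coef T c) (bcM1 n T)"
  by (rule Eig_eq_Eig_check_coef) (auto simp: bc_reflect_defs)

theorem mainTheorem6:
  fixes n :: nat and T \<alpha> :: real and a :: "nat \<Rightarrow> real \<Rightarrow> real"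
  assumes "n \<ge> 1" and "T > 0" and "\<alpha> \<ge> 1"
    and "\<forall>k<2*n. in_Lp \<alpha> {0..T} (a k)"
  defines "a1 \<equiv> refl_coef T a" and "a2 \<equiv> refl_coef (2*T) (refl_coef T a)"
    and "ac \<equiv> check_coef T a"
  shows "(Eig n T a (bcN n T) \<union> Eig n T a (bcD n T) = Eig n (2*T) a1 (bcP n (2*T))) \<and>
    (Eig n T a (bcN n T) \<union> Eig n T a (bcM1 n T) = Eig n (2*T) a1 (bcN n (2*T))) \<and>
    (Eig n T a (bcD n T) \<union> Eig n T a (bcM2 n T) = Eig n (2*T) a1 (bcD n (2*T))) \<and>
    (Eig n T a (bcM1 n T) \<union> Eig n T a (bcM2 n T) = Eig n (2*T) a1 (bcA n (2*T))) \<and>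
    (Eig n T a (bcN n T) \<union> Eig n T a (bcD n T) \<union> Eig n T a (bcM1 n T)
            \<union> Eig n T a (bcM2 n T) = Eig n (4*T) a2 (bcP n (4*T))) \<and>
    (Eig n T a (bcM1 n T) = Eig n T ac (bcM2 n T)) \<and>
    (Eig n T a (bcM2 n T) = Eig n T ac (bcM1 n T))"
proof -
  note n = \<open>n \<ge> 1\<close> and T = \<open>T > 0\<close>
  note N2 = Eig_N_Un_M1_eq_N[OF n T, of a, folded a1_def]
    and D2 = Eig_D_Un_M2_eq_D[OF n T, of a, folded a1_def]
  have "Eig n T a (bcN n T) \<union> Eig n T a (bcD n T) \<union> Eig n T a (bcM1 n T) \<union> Eig n T a (bcM2 n T)
      = (Eig n T a (bcN n T) \<union> Eig n T a (bcM1 n T)) \<union> (Eig n T a (bcD n T) \<union> Eig n T a (bcM2 n T))"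
    by blast
  also have "\<dots> = Eig n (2*T) a1 (bcN n (2*T)) \<union> Eig n (2*T) a1 (bcD n (2*T))"
    by (simp only: N2 D2)
  also have "\<dots> = Eig n (4*T) a2 (bcP n (4*T))"
    using Eig_N_Un_D_eq_P[OF n, of "2*T" a1] T unfolding a1_def a2_def by simp
  finally have P4: "Eig n T a (bcN n T) \<union> Eig n T a (bcD n T) \<union> Eig n T a (bcM1 n T)
      \<union> Eig n T a (bcM2 n T) = Eig n (4*T) a2 (bcP n (4*T))" .
  show ?thesis
    unfolding a1_def ac_def
    by (intro conjI Eig_N_Un_D_eq_P[OF n T] Eig_N_Un_M1_eq_N[OF n T] Eig_D_Un_M2_eq_D[OF n T]
        Eig_M1_Un_M2_eq_A[OF n T] P4 Eig_M1_eq_check_M2[OF n] Eig_M2_eq_check_M1[OF n])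
qed

end
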